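(* Let $r \in \mathbb{Q} \cap (0,1)$ be such that $S_r$ is atomic (equivalently, $\mathsf{n}(r) > 1$). Let $x \in S_r \setminus \{0\}$ and let $z = \sum_{i=0}^N \alpha_i r^i \in \mathsf{Z}(x)$, where $N \in \mathbb{N}$ and $\alpha_0, \dots, \alpha_N \in \mathbb{N}_0$. Then: (1) $|z| = \min \mathsf{L}(x)$ if and only if $\alpha_i < \mathsf{d}(r)$ for all $i \in \{1, \dots, N\}$; (2) there is exactly one factorization in $\mathsf{Z}(x)$ of minimum length; (3) $\sup \mathsf{L}(x) = \infty$ if and only if $\alpha_i \ge \mathsf{n}(r)$ for some $i \in \{0, \dots, N\}$; (4) $|\mathsf{Z}(x)| = 1$ if and only if $|\mathsf{L}(x)| = 1$, and in this case $\alpha_i < \mathsf{n}(r)$ for all $i \in \{0, \dots, N\}$.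
   Context: For $q \in \mathbb{Q}_{>0}$, $\mathsf{n}(q)$ and $\mathsf{d}(q)$ denote the unique positive integers with $\gcd(\mathsf{n}(q),\mathsf{d}(q))=1$ and $q = \mathsf{n}(q)/\mathsf{d}(q)$. For $r \in \mathbb{Q}_{>0}$, $S_r$ denotes the additive submonoid of $(\mathbb{Q}_{\ge 0},+)$ generated by $\{r^n : n \in \mathbb{N}_0\}$. $S_r$ is atomic exactly when $r=1$ or $\mathsf{n}(r)>1$; if moreover $r \notin \mathbb{N}$, its atoms (nonzero elements not expressible as a sum of two nonzero elements) are exactly the pairwise distinct elements $r^n$, $n \in \mathbb{N}_0$. A factorization of $x \in S_r$ is a formal finite sum $\sum_i \alpha_i r^i$ with $\alpha_i \in \mathbb{N}_0$ (an element of the free commutative monoid on the atoms) whose value in $\mathbb{Q}$ is $x$; $\mathsf{Z}(x)$ is the set of factorizations of $x$, the length of $z=\sum_i \alpha_i r^i$ is $|z| = \sum_i \alpha_i$, and $\mathsf{L}(x) = \{|z| : z \in \mathsf{Z}(x)\}$ is the set of lengths of $x$. Two formal sums differing only by zero coefficients are identified. *)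

theory Defs
  imports Complex_Main "HOL-Library.Extended_Nat"
begin

definition numr :: "rat \<Rightarrow> int" where "numr q = fst (quotient_of q)"
definition denr :: "rat \<Rightarrow> int" where "denr q = snd (quotient_of q)"

inductive_set S :: "rat \<Rightarrow> rat set" for r :: rat where
  zero: "0 \<in> S r"
| pow: "r ^ n \<in> S r"
| add: "a \<in> S r \<Longrightarrow> b \<in> S r \<Longrightarrow> a + b \<in> S r"

text \<open>Formal sums \<Sum> \<alpha>_i r^i are represented by finitely supported coefficient functions
  \<alpha> :: nat \<Rightarrow> nat (zero coefficients automatically identified).\<close>
definition fsupp :: "(nat \<Rightarrow> nat) \<Rightarrow> bool" where
  "fsupp \<alpha> \<longleftrightarrow> finite {i. \<alpha> i \<noteq> 0}"

definition fval :: "rat \<Rightarrow> (nat \<Rightarrow> nat) \<Rightarrow> rat" where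
  "fval r \<alpha> = (\<Sum>i\<in>{i. \<alpha> i \<noteq> 0}. of_nat (\<alpha> i) * r ^ i)"

definition flen :: "(nat \<Rightarrow> nat) \<Rightarrow> nat" where
  "flen \<alpha> = (\<Sum>i\<in>{i. \<alpha> i \<noteq> 0}. \<alpha> i)"

definition Z :: "rat \<Rightarrow> rat \<Rightarrow> (nat \<Rightarrow> nat) set" where
  "Z r x = {\<alpha>. fsupp \<alpha> \<and> fval r \<alpha> = x}"

definition L :: "rat \<Rightarrow> rat \<Rightarrow> nat set" where
  "L r x = flen ` Z r x"

end

theory Submission imports Defs begin

text \<open>Write r = n/d in lowest terms, so that n < d and d r^(i+1) = n r^i. Trading d copies of
  r^(i+1) for n copies of r^i shortens a factorization by d - n; the reverse trade lengthens it.
  A factorization admitting no shortening trade has all coefficients below d in positive degrees.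
  Multiplied by d^M its value becomes the integer with these coefficients as digits in the mixed
  base n^i d^(M-i); as n and d are coprime the digits are determined by the value, so there is
  exactly one such factorization, and it is the shortest one. A coefficient \<ge> n can be traded
  upwards forever, lengthening the factorization each time. If instead all coefficients are below
  n, any other factorization would shorten to the reduced one while keeping a coefficient \<ge> n.\<close>

lemma quotient_of_unit_interval:
  fixes r :: rat
  assumes "0 < r" "r < 1"
  obtains n d :: nat where "numr r = int n" "denr r = int d" "of_nat d * r = of_nat n"
    "coprime n d" "0 < n" "n < d"
proof -
  obtain p q where pq: "quotient_of r = (p, q)" by (cases "quotient_of r") auto
  have q: "q > 0" and cop: "coprime p q" and rpq: "r = of_int p / of_int q"
    using quotient_of_denom_pos[OF pq] quotient_of_coprime[OF pq] quotient_of_div[OF pq] .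
  have "0 < of_int p / (of_int q :: rat)" "of_int p / (of_int q :: rat) < 1"
    using rpq assms by simp_all
  then have p: "0 < p" "p < q" using q by (simp_all add: zero_less_divide_iff divide_less_eq)
  show ?thesis
  proof (rule that[of "nat p" "nat q"])
    show "numr r = int (nat p)" "denr r = int (nat q)"
      using pq p q by (simp_all add: numr_def denr_def)
    show "of_nat (nat q) * r = of_nat (nat p)"
      using rpq p q by (simp add: field_simps)
    have "coprime (int (nat p)) (int (nat q))" using cop p q by simp
    then show "coprime (nat p) (nat q)" by (simp only: coprime_int_iff)
    show "0 < nat p" "nat p < nat q" using p by simp_all
  qed
qed

lemma bounded_support_all_Suc_iff:
  fixes \<alpha> :: "nat \<Rightarrow> nat"
  assumes "\<forall>i>N. \<alpha> i = 0" "0 < d"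
  shows "(\<forall>i\<in>{1..N}. \<alpha> i < d) \<longleftrightarrow> (\<forall>i. \<alpha> (Suc i) < d)"
proof
  assume small: "\<forall>i\<in>{1..N}. \<alpha> i < d"
  show "\<forall>i. \<alpha> (Suc i) < d"
  proof
    fix i show "\<alpha> (Suc i) < d" using small assms by (cases "Suc i \<le> N") auto
  qed
next
  assume small: "\<forall>i. \<alpha> (Suc i) < d"
  show "\<forall>i\<in>{1..N}. \<alpha> i < d"
  proof
    fix i assume "i \<in> {1..N}"
    then obtain j where "i = Suc j" by (cases i) auto
    then show "\<alpha> i < d" using small by simp
  qed
qed

lemma bounded_support_ex_ge_iff:
  fixes \<alpha> :: "nat \<Rightarrow> nat"
  assumes "\<forall>i>N. \<alpha> i = 0" "0 < n"
  shows "(\<exists>i\<in>{0..N}. n \<le> \<alpha> i) \<longleftrightarrow> (\<exists>i. n \<le> \<alpha> i)"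
proof
  assume "\<exists>i. n \<le> \<alpha> i"
  then obtain i where i: "n \<le> \<alpha> i" ..
  then have "i \<le> N" using assms by (cases "i \<le> N") auto
  then show "\<exists>i\<in>{0..N}. n \<le> \<alpha> i" using i by auto
qed auto

lemma Sup_enat_image_eq_infinity_iff: "Sup (enat ` A) = \<infinity> \<longleftrightarrow> infinite A"
proof (cases "finite A")
  case True
  have "Max (enat ` A) \<noteq> \<infinity>" if "A \<noteq> {}"
  proof -
    have "Max (enat ` A) \<in> enat ` A" using True that by (intro Max_in) auto
    then show ?thesis by auto
  qed
  with True show ?thesis by (simp add: Sup_enat_def zero_enat_def)
next
  case False
  then show ?thesis by (auto simp: Sup_enat_def finite_image_iff inj_on_def)
qed

lemma fval_eq_sum:
  assumes "finite A" "{i. f i \<noteq> 0} \<subseteq> A"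
  shows "fval r f = (\<Sum>i\<in>A. of_nat (f i) * r ^ i)"
  unfolding fval_def using assms by (intro sum.mono_neutral_left) auto

lemma flen_eq_sum:
  assumes "finite A" "{i. f i \<noteq> 0} \<subseteq> A"
  shows "flen f = (\<Sum>i\<in>A. f i)"
  unfolding flen_def using assms by (intro sum.mono_neutral_left) auto

lemma fsupp_fun_upd: "fsupp f \<Longrightarrow> fsupp (f(i := c))"
  unfolding fsupp_def by (rule finite_subset[of _ "insert i {i. f i \<noteq> 0}"]) auto

lemma fval_add_at:
  assumes "fsupp f"
  shows "fval r (f(i := f i + c)) = fval r f + of_nat c * r ^ i"
proof -
  let ?A = "insert i {i. f i \<noteq> 0}"
  have fin: "finite ?A" using assms unfolding fsupp_def by auto
  have "fval r (f(i := f i + c)) = (\<Sum>k\<in>?A. of_nat ((f(i := f i + c)) k) * r ^ k)"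
    by (rule fval_eq_sum[OF fin]) auto
  also have "\<dots> = of_nat c * r ^ i + (\<Sum>k\<in>?A. of_nat (f k) * r ^ k)"
    using fin by (simp add: sum.remove[of _ i] algebra_simps)
  also have "(\<Sum>k\<in>?A. of_nat (f k) * r ^ k) = fval r f"
    by (rule fval_eq_sum[OF fin, symmetric]) auto
  finally show ?thesis by (simp add: fun_upd_def ac_simps)
qed

lemma flen_add_at:
  assumes "fsupp f"
  shows "flen (f(i := f i + c)) = flen f + c"
proof -
  let ?A = "insert i {i. f i \<noteq> 0}"
  have fin: "finite ?A" using assms unfolding fsupp_def by auto
  have "flen (f(i := f i + c)) = (\<Sum>k\<in>?A. (f(i := f i + c)) k)"
    by (rule flen_eq_sum[OF fin]) auto
  also have "\<dots> = c + (\<Sum>k\<in>?A. f k)"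
    using fin by (simp add: sum.remove[of _ i])
  also have "(\<Sum>k\<in>?A. f k) = flen f"
    by (rule flen_eq_sum[OF fin, symmetric]) auto
  finally show ?thesis by (simp add: fun_upd_def ac_simps)
qed

definition exchange :: "(nat \<Rightarrow> nat) \<Rightarrow> nat \<Rightarrow> nat \<Rightarrow> nat \<Rightarrow> nat \<Rightarrow> nat \<Rightarrow> nat" where
  "exchange f j a k b = (let g = f(j := f j - a) in g(k := g k + b))"

lemma exchange_properties:
  assumes "fsupp f" "a \<le> f j" "of_nat a * r ^ j = of_nat b * r ^ k" "j \<noteq> k"
  shows "fsupp (exchange f j a k b)"
    and "fval r (exchange f j a k b) = fval r f"
    and "flen (exchange f j a k b) + a = flen f + b"
    and "b \<le> exchange f j a k b k"
proof -
  define g where "g = f(j := f j - a)"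
  have h: "exchange f j a k b = g(k := g k + b)" unfolding exchange_def g_def by simp
  have g: "fsupp g" unfolding g_def using assms(1) by (rule fsupp_fun_upd)
  have f: "f = g(j := g j + a)" using assms(2) unfolding g_def by auto
  show "fsupp (exchange f j a k b)" unfolding h by (rule fsupp_fun_upd[OF g])
  have "fval r f = fval r g + of_nat a * r ^ j" by (subst f, rule fval_add_at[OF g])
  then show "fval r (exchange f j a k b) = fval r f"
    unfolding h fval_add_at[OF g] using assms(3) by simp
  have "flen f = flen g + a" by (subst f, rule flen_add_at[OF g])
  then show "flen (exchange f j a k b) + a = flen f + b"
    unfolding h flen_add_at[OF g] by simp
  show "b \<le> exchange f j a k b k" unfolding h by simp
qed

lemma exchange_in_Z:
  assumes "\<beta> \<in> Z r x" "a \<le> \<beta> j" "of_nat a * r ^ j = of_nat b * r ^ k" "j \<noteq> k"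
  shows "exchange \<beta> j a k b \<in> Z r x"
  using assms exchange_properties(1,2)[of \<beta> a j r b k] by (simp add: Z_def)

lemma exchange_down:
  fixes r :: rat and n d :: nat
  assumes r: "of_nat d * r = of_nat n" and \<beta>: "\<beta> \<in> Z r x" and d: "d \<le> \<beta> (Suc i)"
  shows "exchange \<beta> (Suc i) d i n \<in> Z r x"
    and "flen (exchange \<beta> (Suc i) d i n) + d = flen \<beta> + n"
    and "n \<le> exchange \<beta> (Suc i) d i n i"
proof -
  have rel: "of_nat d * r ^ Suc i = of_nat n * r ^ i" using r by (simp add: mult.assoc[symmetric])
  have "fsupp \<beta>" using \<beta> by (simp add: Z_def)
  from exchange_properties[OF this d rel] exchange_in_Z[OF \<beta> d rel]
  show "exchange \<beta> (Suc i) d i n \<in> Z r x"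
    and "flen (exchange \<beta> (Suc i) d i n) + d = flen \<beta> + n"
    and "n \<le> exchange \<beta> (Suc i) d i n i" by simp_all
qed

lemma exchange_up:
  fixes r :: rat and n d :: nat
  assumes r: "of_nat d * r = of_nat n" and \<beta>: "\<beta> \<in> Z r x" and n: "n \<le> \<beta> i"
  shows "exchange \<beta> i n (Suc i) d \<in> Z r x"
    and "flen (exchange \<beta> i n (Suc i) d) + n = flen \<beta> + d"
    and "d \<le> exchange \<beta> i n (Suc i) d (Suc i)"
proof -
  have rel: "of_nat n * r ^ i = of_nat d * r ^ Suc i" using r by (simp add: algebra_simps)
  have "fsupp \<beta>" using \<beta> by (simp add: Z_def)
  from exchange_properties[OF this n rel] exchange_in_Z[OF \<beta> n rel]
  show "exchange \<beta> i n (Suc i) d \<in> Z r x"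
    and "flen (exchange \<beta> i n (Suc i) d) + n = flen \<beta> + d"
    and "d \<le> exchange \<beta> i n (Suc i) d (Suc i)" by simp_all
qed

lemma coprime_digits_unique:
  fixes n d :: nat
  assumes "coprime n d"
    and "(\<Sum>i\<le>M. b i * n ^ i * d ^ (M - i)) = (\<Sum>i\<le>M. c i * n ^ i * d ^ (M - i))"
    and "\<forall>i<M. b (Suc i) < d \<and> c (Suc i) < d"
  shows "\<forall>i\<le>M. b i = c i"
  using assms(2,3)
proof (induction M)
  case 0
  then show ?case by simp
next
  case (Suc M)
  have split: "(\<Sum>i\<le>Suc M. e i * n ^ i * d ^ (Suc M - i))
      = e (Suc M) * n ^ Suc M + d * (\<Sum>i\<le>M. e i * n ^ i * d ^ (M - i))" for e
    by (simp add: sum_distrib_left Suc_diff_le algebra_simps)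
  define B where "B = (\<Sum>i\<le>M. b i * n ^ i * d ^ (M - i))"
  define C where "C = (\<Sum>i\<le>M. c i * n ^ i * d ^ (M - i))"
  have bd: "b (Suc M) < d" "c (Suc M) < d" using Suc.prems(2) by auto
  have eq: "b (Suc M) * n ^ Suc M + d * B = c (Suc M) * n ^ Suc M + d * C"
    using Suc.prems(1) unfolding split B_def C_def .
  then have "(int (b (Suc M)) - int (c (Suc M))) * int n ^ Suc M = int d * (int C - int B)"
    by (simp add: algebra_simps flip: of_nat_mult of_nat_power of_nat_add)
  then have "int d dvd (int (b (Suc M)) - int (c (Suc M))) * int n ^ Suc M" by simp
  moreover have "coprime (int d) (int n ^ Suc M)" using assms(1) by (simp add: coprime_commute)
  ultimately have "int d dvd int (b (Suc M)) - int (c (Suc M))"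
    using coprime_dvd_mult_left_iff by blast
  moreover have "\<bar>int (b (Suc M)) - int (c (Suc M))\<bar> < int d" using bd by auto
  ultimately have top: "b (Suc M) = c (Suc M)"
    using dvd_imp_le_int[of "int (b (Suc M)) - int (c (Suc M))" "int d"] by fastforce
  have "B = C" using eq bd unfolding top by simp
  then have "\<forall>i\<le>M. b i = c i" using Suc.IH Suc.prems(2) unfolding B_def C_def by simp
  then show ?case using top le_Suc_eq by auto
qed

lemma fval_scaled_to_digits:
  fixes r :: rat and n d :: nat
  assumes r: "of_nat d * r = of_nat n" and supp: "{i. e i \<noteq> 0} \<subseteq> {..<M}"
  shows "of_nat d ^ M * fval r e = of_nat (\<Sum>i\<le>M. e i * n ^ i * d ^ (M - i))"
proof -
  have pow: "of_nat d ^ M * r ^ i = of_nat (n ^ i * d ^ (M - i))" if "i \<le> M" for i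
  proof -
    have "of_nat d ^ M * r ^ i = of_nat d ^ (M - i) * (of_nat d * r) ^ i"
      using that by (simp add: power_mult_distrib power_add[symmetric])
    then show ?thesis using r by simp
  qed
  have "fval r e = (\<Sum>i\<le>M. of_nat (e i) * r ^ i)"
    by (rule fval_eq_sum) (use supp in auto)
  then have "of_nat d ^ M * fval r e = (\<Sum>i\<le>M. of_nat (e i) * (of_nat d ^ M * r ^ i))"
    by (simp add: sum_distrib_left algebra_simps)
  also have "\<dots> = (\<Sum>i\<le>M. of_nat (e i * n ^ i * d ^ (M - i)))"
    by (rule sum.cong) (auto simp: pow)
  finally show ?thesis by simp
qed

lemma reduced_factorization_unique:
  fixes r :: rat and n d :: nat
  assumes r: "of_nat d * r = of_nat n" and cop: "coprime n d"
    and \<beta>: "\<beta> \<in> Z r x" and \<gamma>: "\<gamma> \<in> Z r x"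
    and \<beta>_red: "\<forall>i. \<beta> (Suc i) < d" and \<gamma>_red: "\<forall>i. \<gamma> (Suc i) < d"
  shows "\<beta> = \<gamma>"
proof -
  have "finite ({i. \<beta> i \<noteq> 0} \<union> {i. \<gamma> i \<noteq> 0})" using \<beta> \<gamma> by (simp add: Z_def fsupp_def)
  then obtain M where M: "{i. \<beta> i \<noteq> 0} \<union> {i. \<gamma> i \<noteq> 0} \<subseteq> {..<M}"
    using finite_nat_bounded by blast
  have "(of_nat (\<Sum>i\<le>M. \<beta> i * n ^ i * d ^ (M - i)) :: rat)
      = of_nat (\<Sum>i\<le>M. \<gamma> i * n ^ i * d ^ (M - i))"
    using fval_scaled_to_digits[OF r, of \<beta> M] fval_scaled_to_digits[OF r, of \<gamma> M] M \<beta> \<gamma>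
    by (simp add: Z_def)
  then have low: "\<forall>i\<le>M. \<beta> i = \<gamma> i"
    using coprime_digits_unique[OF cop] \<beta>_red \<gamma>_red by (simp only: of_nat_eq_iff) auto
  have high: "\<beta> i = \<gamma> i" if "M < i" for i
  proof -
    have "i \<notin> {..<M}" using that by simp
    then have "\<beta> i = 0" "\<gamma> i = 0" using M by blast+
    then show ?thesis by simp
  qed
  show ?thesis
  proof
    fix i show "\<beta> i = \<gamma> i" using low high[of i] by (cases "i \<le> M") auto
  qed
qed

lemma Inf_L_le: "\<beta> \<in> Z r x \<Longrightarrow> Inf (L r x) \<le> flen \<beta>"
  unfolding L_def by (simp add: cInf_lower)

lemma Inf_L_attained:
  assumes "\<alpha> \<in> Z r x"
  obtains \<mu> where "\<mu> \<in> Z r x" "flen \<mu> = Inf (L r x)"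
proof -
  have "L r x \<noteq> {}" using assms unfolding L_def by auto
  then have "Inf (L r x) \<in> L r x" by (rule Inf_nat_def1)
  then show ?thesis using that unfolding L_def by auto
qed

lemma min_length_imp_reduced:
  fixes r :: rat and n d :: nat
  assumes r: "of_nat d * r = of_nat n" and nd: "n < d"
    and \<beta>: "\<beta> \<in> Z r x" and min: "flen \<beta> = Inf (L r x)"
  shows "\<forall>i. \<beta> (Suc i) < d"
proof (rule ccontr)
  assume "\<not> (\<forall>i. \<beta> (Suc i) < d)"
  then obtain i where "d \<le> \<beta> (Suc i)" by (auto simp: not_less)
  note c = exchange_down[OF r \<beta> this]
  have "Inf (L r x) \<le> flen (exchange \<beta> (Suc i) d i n)" by (rule Inf_L_le[OF c(1)])
  then show False using c(2) min nd by linarith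
qed

lemma min_length_iff_reduced:
  fixes r :: rat and n d :: nat
  assumes r: "of_nat d * r = of_nat n" and cop: "coprime n d" and nd: "n < d"
    and \<beta>: "\<beta> \<in> Z r x"
  shows "flen \<beta> = Inf (L r x) \<longleftrightarrow> (\<forall>i. \<beta> (Suc i) < d)"
proof -
  obtain \<mu> where \<mu>: "\<mu> \<in> Z r x" "flen \<mu> = Inf (L r x)" using Inf_L_attained[OF \<beta>] .
  show ?thesis
    using min_length_imp_reduced[OF r nd] reduced_factorization_unique[OF r cop \<beta> \<mu>(1)] \<mu> \<beta>
    by auto
qed

lemma min_length_factorization_unique:
  fixes r :: rat and n d :: nat
  assumes r: "of_nat d * r = of_nat n" and cop: "coprime n d" and nd: "n < d"
    and \<alpha>: "\<alpha> \<in> Z r x"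
  shows "\<exists>!\<beta>. \<beta> \<in> Z r x \<and> flen \<beta> = Inf (L r x)"
proof -
  obtain \<mu> where "\<mu> \<in> Z r x" "flen \<mu> = Inf (L r x)" using Inf_L_attained[OF \<alpha>] .
  then show ?thesis
    using min_length_iff_reduced[OF r cop nd] reduced_factorization_unique[OF r cop] by metis
qed

lemma small_coefficients_imp_unique_factorization:
  fixes r :: rat and n d :: nat
  assumes r: "of_nat d * r = of_nat n" and cop: "coprime n d" and nd: "n < d"
    and \<alpha>: "\<alpha> \<in> Z r x" and small: "\<forall>i. \<alpha> i < n"
  shows "Z r x = {\<alpha>}"
proof -
  have \<alpha>_red: "\<forall>i. \<alpha> (Suc i) < d" using small nd less_trans by blast
  have "\<beta> = \<alpha>" if "\<beta> \<in> Z r x" for \<beta>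
    using that
  proof (induction "flen \<beta>" arbitrary: \<beta> rule: less_induct)
    case less
    show ?case
    proof (cases "\<forall>i. \<beta> (Suc i) < d")
      case True
      then show ?thesis using reduced_factorization_unique[OF r cop less.prems \<alpha>] \<alpha>_red by simp
    next
      case False
      then obtain i where "d \<le> \<beta> (Suc i)" by (auto simp: not_less)
      note c = exchange_down[OF r less.prems this]
      have "exchange \<beta> (Suc i) d i n = \<alpha>"
        using c(1,2) nd by (intro less.hyps) linarith+
      then show ?thesis using c(3) small by (metis not_le)
    qed
  qed
  then show ?thesis using \<alpha> by blast
qed

lemma large_coefficient_imp_long_factorizations:
  fixes r :: rat and n d :: nat
  assumes r: "of_nat d * r = of_nat n" and nd: "n < d"
    and \<gamma>: "\<gamma> \<in> Z r x" and large: "n \<le> \<gamma> j"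
  shows "\<exists>\<delta>\<in>Z r x. flen \<gamma> + k \<le> flen \<delta>"
  using \<gamma> large
proof (induction k arbitrary: \<gamma> j)
  case 0
  then show ?case by auto
next
  case (Suc k)
  note e = exchange_up[OF r Suc.prems]
  have "n \<le> exchange \<gamma> j n (Suc j) d (Suc j)" using e(3) nd by linarith
  then obtain \<delta> where "\<delta> \<in> Z r x" "flen (exchange \<gamma> j n (Suc j) d) + k \<le> flen \<delta>"
    using Suc.IH e(1) by blast
  then show ?case using e(2) nd by (intro bexI[of _ \<delta>]) auto
qed

lemma large_coefficient_imp_infinite_lengths:
  fixes r :: rat and n d :: nat
  assumes "of_nat d * r = of_nat n" "n < d" "\<gamma> \<in> Z r x" "n \<le> \<gamma> j"
  shows "infinite (L r x)"
proof (unfold infinite_nat_iff_unbounded_le, intro allI)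
  fix k
  obtain \<delta> where "\<delta> \<in> Z r x" "flen \<gamma> + k \<le> flen \<delta>"
    using large_coefficient_imp_long_factorizations[OF assms] by blast
  then show "\<exists>l\<ge>k. l \<in> L r x" unfolding L_def by (intro exI[of _ "flen \<delta>"]) auto
qed

lemma coefficients_below_numerator_iff:
  fixes r :: rat and n d :: nat
  assumes r: "of_nat d * r = of_nat n" and cop: "coprime n d" and nd: "n < d"
    and \<alpha>: "\<alpha> \<in> Z r x"
  shows "finite (L r x) \<longleftrightarrow> (\<forall>i. \<alpha> i < n)"
    and "card (Z r x) = 1 \<longleftrightarrow> (\<forall>i. \<alpha> i < n)"
    and "card (L r x) = 1 \<longleftrightarrow> (\<forall>i. \<alpha> i < n)"
proof -
  have unique: "Z r x = {\<alpha>}" if "\<forall>i. \<alpha> i < n"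
    using small_coefficients_imp_unique_factorization[OF r cop nd \<alpha> that] .
  show finite_iff: "finite (L r x) \<longleftrightarrow> (\<forall>i. \<alpha> i < n)"
  proof
    assume "finite (L r x)"
    then show "\<forall>i. \<alpha> i < n"
      using large_coefficient_imp_infinite_lengths[OF r nd \<alpha>] by (meson not_less)
  qed (simp add: L_def unique)
  show "card (Z r x) = 1 \<longleftrightarrow> (\<forall>i. \<alpha> i < n)"
  proof
    assume "card (Z r x) = 1"
    then have "finite (L r x)" unfolding L_def by (intro finite_imageI card_ge_0_finite) simp
    then show "\<forall>i. \<alpha> i < n" using finite_iff by simp
  qed (simp add: unique)
  show "card (L r x) = 1 \<longleftrightarrow> (\<forall>i. \<alpha> i < n)"
  proof
    assume "card (L r x) = 1"
    then have "finite (L r x)" by (intro card_ge_0_finite) simp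
    then show "\<forall>i. \<alpha> i < n" using finite_iff by simp
  qed (simp add: L_def unique)
qed

theorem lemma3p1:
  fixes r x :: rat and \<alpha> :: "nat \<Rightarrow> nat" and N :: nat
  assumes "0 < r" and "r < 1"
    and "numr r > 1"
    and "x \<in> S r" and "x \<noteq> 0"
    and "\<forall>i>N. \<alpha> i = 0"
    and "\<alpha> \<in> Z r x"
  shows "(flen \<alpha> = Inf (L r x) \<longleftrightarrow> (\<forall>i\<in>{1..N}. int (\<alpha> i) < denr r))
    \<and> (\<exists>!\<beta>. \<beta> \<in> Z r x \<and> flen \<beta> = Inf (L r x))
    \<and> ((Sup (enat ` L r x) = \<infinity>) \<longleftrightarrow> (\<exists>i\<in>{0..N}. int (\<alpha> i) \<ge> numr r))
    \<and> ((card (Z r x) = 1 \<longleftrightarrow> card (L r x) = 1)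
       \<and> (card (Z r x) = 1 \<longrightarrow> (\<forall>i\<in>{0..N}. int (\<alpha> i) < numr r)))"
proof -
  obtain n d where num: "numr r = int n" and den: "denr r = int d"
    and r: "of_nat d * r = of_nat n" and cop: "coprime n d" and "0 < n" "n < d"
    using quotient_of_unit_interval[OF assms(1,2)] .
  have "(\<forall>i\<in>{1..N}. int (\<alpha> i) < denr r) \<longleftrightarrow> (\<forall>i. \<alpha> (Suc i) < d)"
    using bounded_support_all_Suc_iff[OF assms(6), of d] \<open>n < d\<close> den by simp
  moreover have "(\<exists>i\<in>{0..N}. int (\<alpha> i) \<ge> numr r) \<longleftrightarrow> (\<exists>i. n \<le> \<alpha> i)"
    using bounded_support_ex_ge_iff[OF assms(6) \<open>0 < n\<close>] num by simp
  ultimately show ?thesis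
    using min_length_iff_reduced[OF r cop \<open>n < d\<close> assms(7)]
      min_length_factorization_unique[OF r cop \<open>n < d\<close> assms(7)]
      coefficients_below_numerator_iff[OF r cop \<open>n < d\<close> assms(7)]
      Sup_enat_image_eq_infinity_iff[of "L r x"] num
    by (auto simp: not_less)
qed

end
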